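(* Let $z_1 = 0$, $z_2=1/3$, $z_3 = -1/3$. For every $\varepsilon > 0$ there exist $T>0$ and $h \in \mathcal{H}$ such that \[ \begin{aligned} z_1-\varepsilon \leq \gamma^{z_3}_h(T)&< \gamma^{z_2}_h(T) \leq z_1+\varepsilon, \\ z_2-\varepsilon \leq \gamma^{z_1}_h(3T)&< \gamma^{z_3}_h(3T)+1 \leq z_2+\varepsilon, \\ z_3-\varepsilon \leq \gamma^{z_2}_h(5T)-1&< \gamma^{z_1}_h(5T) \leq z_3+\varepsilon. \end{aligned} \]
   Context: $\mathcal H$ is the space of piecewise constant compactly supported functions $h=(h_1,h_{-1}):\mathbb{R}^+\to\mathbb{R}^2$. For fixed $\sigma>0$ and $x\in\mathbb{R}$, $\gamma^x_h$ is the real-valued solution of $\frac{\mathrm{d}\gamma^x_h}{\mathrm{d}t}=c+\sigma^2\big(\mathfrak a(\gamma^x_h)-\tfrac12\sum_{k\in\mathbb{Z}}\mathfrak b_k'(\gamma^x_h)\mathfrak b_k(\gamma^x_h)\big)+\sigma\big(\mathfrak b_1(\gamma^x_h)h_1+\mathfrak b_{-1}(\gamma^x_h)h_{-1}\big)$, $\gamma^x_h(0)=x$. Here, for a traveling pulse $u^*$ (speed $c$) of $\mathrm{d}u=Au\,\mathrm{d}t+f(u)\,\mathrm{d}t$ on $\mathcal X=H^{s,p}(\mathbb{R};\mathbb{R}^n)$, with $\mathcal T_xf=f(\cdot-x)$, isochron map $\pi_{\mathrm{iso}}$ (upright $\pi$ in the paper, not the circle constant; defined by $\lim_{t\to\infty}\|u^v(t)-u^*(\cdot-ct-\pi_{\mathrm{iso}}(v))\|_{\mathcal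 X}=0$), basis $e_k(x)=\sqrt2\cos(2\pi kx)$ ($k>0$), $e_0=1$, $e_k(x)=\sqrt2\sin(2\pi kx)$ ($k<0$), coefficients $\alpha_k$, nonlinearity $g$: $\mathfrak a(x)=\tfrac12\sum_k\alpha_k^2\big(\pi_{\mathrm{iso}}'(\mathcal T_xu^* )[g'(\mathcal T_xu^* )g(\mathcal T_xu^* )e_k^2]+\pi_{\mathrm{iso}}''(\mathcal T_xu^* )[g(\mathcal T_xu^* )e_k,g(\mathcal T_xu^* )e_k]\big)$, $\mathfrak b_k(x)=\alpha_k\pi_{\mathrm{iso}}'(\mathcal T_xu^* )[g(\mathcal T_xu^* )e_k]$; these are smooth, 1-periodic, and $\mathrm{span}\{\mathfrak b_1,\mathfrak b_{-1}\}=\{L\sin(2\pi\cdot+\eta):L,\eta\in\mathbb{R}\}$. (The same statement holds for the drift-free control ODE $\frac{\mathrm{d}\tilde\gamma^x_h}{\mathrm{d}t}=\sigma(\mathfrak b_1(\tilde\gamma^x_h)h_1+\mathfrak b_{-1}(\tilde\gamma^x_h)h_{-1})$, and the present lemma transfers it perturbatively.) *)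

theory Defs
  imports "HOL-Analysis.Analysis"
begin

definition smooth_fun :: "(real \<Rightarrow> real) \<Rightarrow> bool" where
  "smooth_fun f \<longleftrightarrow> (\<forall>n x. ((deriv ^^ n) f) differentiable (at x))"

definition one_periodic :: "(real \<Rightarrow> real) \<Rightarrow> bool" where
  "one_periodic f \<longleftrightarrow> (\<forall>x. f (x + 1) = f x)"

text \<open>The control space H: piecewise constant, compactly supported functions
  h = (h_1, h_{-1}) on the half line [0, infinity). Only values at times t >= 0 matter.\<close>
definition in_H :: "(real \<Rightarrow> real \<times> real) \<Rightarrow> bool" where
  "in_H h \<longleftrightarrow> (\<exists>(n::nat) (t::nat \<Rightarrow> real) (v::nat \<Rightarrow> real \<times> real).
      t 0 = 0 \<and> (\<forall>i<n. t i < t (Suc i)) \<and>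
      (\<forall>i<n. \<forall>s. t i \<le> s \<and> s < t (Suc i) \<longrightarrow> h s = v i) \<and>
      (\<forall>s. t n \<le> s \<longrightarrow> h s = (0, 0)))"

definition drift_term :: "(real \<Rightarrow> real) \<Rightarrow> (int \<Rightarrow> real \<Rightarrow> real) \<Rightarrow> real \<Rightarrow> real" where
  "drift_term a b x = a x - (1/2) * infsum (\<lambda>k. deriv (b k) x * b k x) UNIV"

definition ctrl_rhs :: "real \<Rightarrow> real \<Rightarrow> (real \<Rightarrow> real) \<Rightarrow> (int \<Rightarrow> real \<Rightarrow> real)
    \<Rightarrow> (real \<Rightarrow> real \<times> real) \<Rightarrow> real \<Rightarrow> real \<Rightarrow> real" where
  "ctrl_rhs c \<sigma> a b h t y =
     c + \<sigma>\<^sup>2 * drift_term a b y + \<sigma> * (b 1 y * fst (h t) + b (-1) y * snd (h t))"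

text \<open>g is a (Caratheodory, i.e. integral-form) solution on [0, infinity) of the
  control ODE with initial value x; since h is piecewise constant, this is the
  usual notion of solution.\<close>
definition is_ctrl_sol :: "real \<Rightarrow> real \<Rightarrow> (real \<Rightarrow> real) \<Rightarrow> (int \<Rightarrow> real \<Rightarrow> real)
    \<Rightarrow> (real \<Rightarrow> real \<times> real) \<Rightarrow> real \<Rightarrow> (real \<Rightarrow> real) \<Rightarrow> bool" where
  "is_ctrl_sol c \<sigma> a b h x g \<longleftrightarrow>
     continuous_on {0..} g \<and>
     (\<forall>t\<ge>0. (\<lambda>s. ctrl_rhs c \<sigma> a b h s (g s)) integrable_on {0..t} \<and>
             g t = x + integral {0..t} (\<lambda>s. ctrl_rhs c \<sigma> a b h s (g s)))"

end

theory Submission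
  imports Defs
begin

text \<open>By the span hypothesis the control term can realise any field \<open>K sin (2\<pi>(y - p))\<close>, whose
  flow is explicit. With \<open>KT\<close> fixed and \<open>K\<close> large, Gronwall's inequality keeps every solution of
  the full equation, whose drift is bounded by some \<open>M\<close>, within \<open>O(M/K)\<close> of that flow on each
  phase of length \<open>T\<close>. Five phases, contracting towards \<open>0\<close>, expanding back, contracting
  towards \<open>1/3\<close>, expanding back and contracting towards \<open>-1/3\<close>, keep the point at the centre
  fixed and move the points at distance \<open>1/3\<close> to distance \<open>arctan (\<surd>3 exp (-2\<pi>KT)) / \<pi>\<close>.
  This is small, but larger than the accumulated error once \<open>K\<close> is large.\<close>

lemma nonpos_if_deriv_nonpos_where_pos:
  fixes \<phi> \<phi>' :: "real \<Rightarrow> real"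
  assumes "a \<le> b" and cont: "continuous_on {a..b} \<phi>"
    and der: "\<And>t. a < t \<Longrightarrow> t < b \<Longrightarrow> (\<phi> has_real_derivative \<phi>' t) (at t)"
    and sgn: "\<And>t. a < t \<Longrightarrow> t < b \<Longrightarrow> \<phi> t > 0 \<Longrightarrow> \<phi>' t \<le> 0"
    and "\<phi> a \<le> 0"
  shows "\<phi> b \<le> 0"
proof (rule ccontr)
  assume "\<not> \<phi> b \<le> 0"
  define S where "S = {a..b} \<inter> \<phi> -` {..0}"
  have "a \<in> S" and bdd: "bdd_above S" using assms by (auto simp: S_def bdd_above_def)
  moreover have "closed S" unfolding S_def by (rule continuous_closed_preimage[OF cont]) auto
  ultimately have "Sup S \<in> S" using closed_contains_Sup by blast
  hence s0: "a \<le> Sup S" "Sup S \<le> b" "\<phi> (Sup S) \<le> 0" by (auto simp: S_def)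
  have pos: "\<phi> t > 0" if "Sup S < t" "t \<le> b" for t
    using that s0 cSup_upper[OF _ bdd, of t] by (force simp: S_def)
  have "\<phi> b \<le> \<phi> (Sup S)"
  proof (rule DERIV_nonpos_imp_decreasing_open[of "Sup S" b \<phi>])
    show "\<exists>y. (\<phi> has_real_derivative y) (at t) \<and> y \<le> 0" if "Sup S < t" "t < b" for t
      using der[of t] sgn[of t] pos[of t] that s0 by force
    show "continuous_on {Sup S..b} \<phi>" using cont s0 by (auto intro: continuous_on_subset)
  qed (use s0 in auto)
  with s0 \<open>\<not> \<phi> b \<le> 0\<close> show False by simp
qed

lemma gronwall_perturbed_upper:
  fixes g y d G :: "real \<Rightarrow> real"
  assumes "t0 \<le> t1" and cont_g: "continuous_on {t0..t1} g" and cont_y: "continuous_on {t0..t1} y"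
    and dg: "\<And>t. t0 < t \<Longrightarrow> t < t1 \<Longrightarrow> (g has_real_derivative d t + G (g t)) (at t)"
    and dy: "\<And>t. t0 < t \<Longrightarrow> t < t1 \<Longrightarrow> (y has_real_derivative G (y t)) (at t)"
    and d_bound: "\<And>t. t0 < t \<Longrightarrow> t < t1 \<Longrightarrow> \<bar>d t\<bar> \<le> M"
    and G_lipschitz: "\<And>u v. \<bar>G u - G v\<bar> \<le> L * \<bar>u - v\<bar>" and "L > 0"
    and "M \<ge> 0" and "e \<ge> 0" and start: "g t0 - y t0 \<le> e"
  shows "g t1 - y t1 \<le> (e + M / L) * exp (L * (t1 - t0))"
proof -
  define w where "w t = exp (- L * (t - t0))" for t
  \<comment> \<open>\<open>\<phi> t \<le> 0\<close> says \<open>g t - y t \<le> (e + M / L) * exp (L * (t - t0)) - M / L\<close>\<close>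
  define \<phi> where "\<phi> t = (g t - y t) * w t - e - M / L * (1 - w t)" for t
  define \<phi>' where "\<phi>' t = (d t + G (g t) - G (y t) - L * (g t - y t) - M) * w t" for t
  have w: "0 < w t" "w t \<le> 1" if "t0 \<le> t" for t
    using that \<open>L > 0\<close> by (auto simp: w_def)
  have "\<phi> t1 \<le> 0"
  proof (rule nonpos_if_deriv_nonpos_where_pos[OF \<open>t0 \<le> t1\<close>, of \<phi> \<phi>'])
    show "continuous_on {t0..t1} \<phi>"
      unfolding \<phi>_def w_def using cont_g cont_y by (intro continuous_intros) auto
    show "(\<phi> has_real_derivative \<phi>' t) (at t)" if "t0 < t" "t < t1" for t
      unfolding \<phi>_def[abs_def] \<phi>'_def w_def
      by (rule derivative_eq_intros dg[OF that] dy[OF that] refl | simp)+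
        (use \<open>L > 0\<close> in \<open>simp add: algebra_simps\<close>)
    show "\<phi>' t \<le> 0" if "t0 < t" "t < t1" "\<phi> t > 0" for t
    proof -
      \<comment> \<open>\<open>\<phi> t > 0\<close> forces \<open>g t > y t\<close>, where the Lipschitz bound makes the bracket of \<open>\<phi>'\<close> nonpositive\<close>
      have "M / L * (1 - w t) \<ge> 0" using w[of t] that \<open>M \<ge> 0\<close> \<open>L > 0\<close> by simp
      hence "(g t - y t) * w t > 0" using \<open>\<phi> t > 0\<close> \<open>e \<ge> 0\<close> by (simp add: \<phi>_def)
      hence "g t - y t > 0" using w[of t] that by (simp add: zero_less_mult_iff)
      hence "d t + G (g t) - G (y t) - L * (g t - y t) - M \<le> 0"
        using d_bound[OF that(1,2)] G_lipschitz[of "g t" "y t"] by simp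
      thus ?thesis using w[of t] that by (simp add: \<phi>'_def mult_nonpos_nonneg)
    qed
  qed (use start in \<open>simp add: \<phi>_def w_def\<close>)
  moreover have "M / L * (1 - w t1) \<le> M / L"
    using w[of t1] \<open>t0 \<le> t1\<close> \<open>M \<ge> 0\<close> \<open>L > 0\<close> by (intro mult_left_le) auto
  ultimately have "(g t1 - y t1) * w t1 \<le> e + M / L" by (simp add: \<phi>_def)
  moreover have "w t1 * exp (L * (t1 - t0)) = 1" by (simp add: w_def flip: exp_add)
  ultimately show ?thesis
    by (metis mult.assoc mult_cancel_left1 mult_right_mono exp_ge_zero)
qed

lemma gronwall_perturbed:
  fixes g y d G :: "real \<Rightarrow> real"
  assumes "t0 \<le> t1" and cont_g: "continuous_on {t0..t1} g" and cont_y: "continuous_on {t0..t1} y"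
    and dg: "\<And>t. t0 < t \<Longrightarrow> t < t1 \<Longrightarrow> (g has_real_derivative d t + G (g t)) (at t)"
    and dy: "\<And>t. t0 < t \<Longrightarrow> t < t1 \<Longrightarrow> (y has_real_derivative G (y t)) (at t)"
    and d_bound: "\<And>t. t0 < t \<Longrightarrow> t < t1 \<Longrightarrow> \<bar>d t\<bar> \<le> M"
    and G_lipschitz: "\<And>u v. \<bar>G u - G v\<bar> \<le> L * \<bar>u - v\<bar>" and "L > 0"
    and "M \<ge> 0" and start: "\<bar>g t0 - y t0\<bar> \<le> e"
  shows "\<bar>g t1 - y t1\<bar> \<le> (e + M / L) * exp (L * (t1 - t0))"
proof -
  have "e \<ge> 0" using start by linarith
  have "g t1 - y t1 \<le> (e + M / L) * exp (L * (t1 - t0))"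
    by (rule gronwall_perturbed_upper[OF assms(1-8) \<open>M \<ge> 0\<close> \<open>e \<ge> 0\<close>]) (use start in auto)
  moreover have "(- g t1) - (- y t1) \<le> (e + M / L) * exp (L * (t1 - t0))"
  proof (rule gronwall_perturbed_upper[where d = "\<lambda>t. - d t" and G = "\<lambda>u. - G (- u)"])
    show "((\<lambda>t. - g t) has_real_derivative - d t + - G (- (- g t))) (at t)" if "t0 < t" "t < t1" for t
      using DERIV_minus[OF dg[OF that]] by simp
    show "((\<lambda>t. - y t) has_real_derivative - G (- (- y t))) (at t)" if "t0 < t" "t < t1" for t
      using DERIV_minus[OF dy[OF that]] by simp
    show "\<bar>- G (- u) - - G (- v)\<bar> \<le> L * \<bar>u - v\<bar>" for u v
      using G_lipschitz[of "- v" "- u"] by (simp add: abs_minus_commute)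
  qed (use assms \<open>e \<ge> 0\<close> in \<open>auto intro: continuous_intros\<close>)
  ultimately show ?thesis by linarith
qed

lemma sin_diff_shift_Ints:
  fixes p p' y :: real
  assumes "p' - p \<in> \<int>"
  shows "sin (2 * pi * (y - p')) = sin (2 * pi * (y - p))"
proof -
  obtain n where "p' - p = of_int n" using assms by (auto elim: Ints_cases)
  hence "2 * pi * (y - p) = 2 * pi * (y - p') + 2 * pi * of_int n" by (simp add: algebra_simps)
  thus ?thesis by (simp add: sin_add)
qed

lemma abs_sin_diff_le: "\<bar>sin (x::real) - sin y\<bar> \<le> \<bar>x - y\<bar>"
proof -
  have "\<bar>sin x - sin y\<bar> = 2 * \<bar>sin ((x - y) / 2)\<bar> * \<bar>cos ((x + y) / 2)\<bar>"
    unfolding sin_diff_sin by (simp add: abs_mult)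
  also have "\<dots> \<le> 2 * \<bar>(x - y) / 2\<bar> * 1"
    by (intro mult_mono abs_sin_x_le_abs_x) auto
  finally show ?thesis by simp
qed

lemma sine_field_lipschitz:
  "\<bar>s * sin (2 * pi * (u - p)) - s * sin (2 * pi * (v - p))\<bar> \<le> 2 * pi * \<bar>s\<bar> * \<bar>u - v\<bar>"
proof -
  have "2 * pi * (u - p) - 2 * pi * (v - p) = 2 * pi * (u - v)" by (simp add: algebra_simps)
  hence "\<bar>2 * pi * (u - p) - 2 * pi * (v - p)\<bar> = 2 * pi * \<bar>u - v\<bar>" by (simp add: abs_mult)
  hence "\<bar>sin (2 * pi * (u - p)) - sin (2 * pi * (v - p))\<bar> \<le> 2 * pi * \<bar>u - v\<bar>"
    using abs_sin_diff_le by metis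
  hence "\<bar>s\<bar> * \<bar>sin (2 * pi * (u - p)) - sin (2 * pi * (v - p))\<bar> \<le> \<bar>s\<bar> * (2 * pi * \<bar>u - v\<bar>)"
    by (rule mult_left_mono) simp
  thus ?thesis by (simp add: abs_mult mult_ac flip: right_diff_distrib)
qed

text \<open>Along solutions of \<open>y' = s sin (2\<pi>(y - p))\<close> the quantity \<open>tan (\<pi>(y - p))\<close> grows like
  \<open>exp (2\<pi>st)\<close>; \<open>z\<close> is its initial value.\<close>
definition sine_flow :: "real \<Rightarrow> real \<Rightarrow> real \<Rightarrow> real \<Rightarrow> real" where
  "sine_flow s p z t = p + arctan (z * exp (2 * pi * s * t)) / pi"

lemma sin_two_arctan: "sin (2 * arctan z) = 2 * z / (1 + z\<^sup>2)"
proof -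
  have "sqrt (1 + z\<^sup>2) * sqrt (1 + z\<^sup>2) = 1 + z\<^sup>2" by (simp add: add_pos_nonneg)
  thus ?thesis unfolding sin_double sin_arctan cos_arctan by (simp add: field_simps)
qed

lemma sine_flow_has_real_derivative:
  "(sine_flow s p z has_real_derivative s * sin (2 * pi * (sine_flow s p z t - p))) (at t)"
proof -
  define w where "w = z * exp (2 * pi * s * t)"
  have "(sine_flow s p z has_real_derivative z * (exp (2 * pi * s * t) * (2 * pi * s)) / (1 + w\<^sup>2) / pi) (at t)"
    unfolding sine_flow_def[abs_def] w_def
    by (rule derivative_eq_intros refl | simp)+ (simp add: field_simps)
  moreover have "z * (exp (2 * pi * s * t) * (2 * pi * s)) = pi * (s * (2 * w))"
    by (simp add: w_def mult_ac)
  moreover have "2 * pi * (sine_flow s p z t - p) = 2 * arctan w" by (simp add: sine_flow_def w_def)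
  hence "sin (2 * pi * (sine_flow s p z t - p)) = 2 * w / (1 + w\<^sup>2)" by (simp only: sin_two_arctan)
  ultimately show ?thesis by simp
qed

lemma is_ctrl_sol_initial: "is_ctrl_sol c \<sigma> a b h x g \<Longrightarrow> g 0 = x"
  by (simp add: is_ctrl_sol_def)

lemma is_ctrl_sol_continuous_on:
  assumes "is_ctrl_sol c \<sigma> a b h x g" and "0 \<le> t0"
  shows "continuous_on {t0..t1} g"
proof -
  have "continuous_on {0..} g" using assms(1) unfolding is_ctrl_sol_def by blast
  thus ?thesis by (rule continuous_on_subset) (use assms(2) in auto)
qed

lemma is_ctrl_sol_has_real_derivative:
  assumes sol: "is_ctrl_sol c \<sigma> a b h x g" and "0 \<le> t0" and t: "t0 < t" "t < t1"
    and const: "\<And>r. t0 \<le> r \<Longrightarrow> r < t1 \<Longrightarrow> h r = (u, v)"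
    and cont: "continuous_on UNIV (drift_term a b)" "continuous_on UNIV (b 1)" "continuous_on UNIV (b (-1))"
  shows "(g has_real_derivative
           c + \<sigma>\<^sup>2 * drift_term a b (g t) + \<sigma> * (b 1 (g t) * u + b (-1) (g t) * v)) (at t)"
proof -
  define F where "F y = c + \<sigma>\<^sup>2 * drift_term a b y + \<sigma> * (b 1 y * u + b (-1) y * v)" for y
  define f where "f s = ctrl_rhs c \<sigma> a b h s (g s)" for s
  have integral_eq: "\<And>t. t \<ge> 0 \<Longrightarrow> f integrable_on {0..t} \<and> g t = x + integral {0..t} f"
    using sol by (simp add: is_ctrl_sol_def f_def[abs_def])
  have cont_g: "continuous_on {t0..t1} g" by (rule is_ctrl_sol_continuous_on[OF sol \<open>0 \<le> t0\<close>])
  have f_eq: "f s = F (g s)" if "t0 \<le> s" "s < t1" for s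
    using const[OF that] by (simp add: f_def F_def ctrl_rhs_def algebra_simps)
  have "continuous_on UNIV F" unfolding F_def[abs_def] using cont by (intro continuous_intros) auto
  hence cont_Fg: "continuous_on {t0..t1} (\<lambda>s. F (g s))"
    using continuous_on_compose2[OF _ cont_g] by blast
  have g_eq: "g r = g t0 + integral {t0..r} (\<lambda>s. F (g s))" if "t0 \<le> r" "r \<le> t1" for r
  proof -
    have "integral {0..t0} f + integral {t0..r} f = integral {0..r} f"
      using integral_eq[of r] that \<open>0 \<le> t0\<close> by (intro Henstock_Kurzweil_Integration.integral_combine) auto
    moreover have "integral {t0..r} f = integral {t0..r} (\<lambda>s. F (g s))"
      by (rule integral_spike[of "{r}"]) (use that f_eq in auto)
    ultimately show ?thesis using integral_eq[of r] integral_eq[of t0] that \<open>0 \<le> t0\<close> by simp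
  qed
  have "((\<lambda>r. integral {t0..r} (\<lambda>s. F (g s))) has_real_derivative F (g t)) (at t)"
    using integral_has_real_derivative[OF cont_Fg, of t] t by (simp add: at_within_Icc_at)
  hence "((\<lambda>r. g t0 + integral {t0..r} (\<lambda>s. F (g s))) has_real_derivative F (g t)) (at t)"
    using DERIV_add[OF DERIV_const[of "g t0" "at t"]] by simp
  hence "(g has_real_derivative F (g t)) (at t)"
  proof (rule has_field_derivative_transform_within_open)
    show "open {t0<..<t1}" and "t \<in> {t0<..<t1}" using t by auto
    show "g t0 + integral {t0..r} (\<lambda>s. F (g s)) = g r" if "r \<in> {t0<..<t1}" for r
      using g_eq[of r] that by simp
  qed
  thus ?thesis unfolding F_def .
qed

lemma sine_phase_tracking:
  assumes sol: "is_ctrl_sol c \<sigma> a b h x g" and "0 \<le> t0" and "T > 0"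
    and const: "\<And>r. t0 \<le> r \<Longrightarrow> r < t0 + T \<Longrightarrow> h r = (u, v)"
    and field: "\<And>y. \<sigma> * (b 1 y * u + b (-1) y * v) = s * sin (2 * pi * (y - p))" and "s \<noteq> 0"
    and cont: "continuous_on UNIV (drift_term a b)" "continuous_on UNIV (b 1)" "continuous_on UNIV (b (-1))"
    and bound: "\<And>y. \<bar>c + \<sigma>\<^sup>2 * drift_term a b y\<bar> \<le> M"
    and "p' - p \<in> \<int>"
    and start: "\<bar>g t0 - sine_flow s p' z 0\<bar> \<le> e"
  shows "\<bar>g (t0 + T) - sine_flow s p' z T\<bar> \<le> (e + M / (2 * pi * \<bar>s\<bar>)) * exp (2 * pi * \<bar>s\<bar> * T)"
proof -
  define y where "y t = sine_flow s p' z (t - t0)" for t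
  have "\<bar>g (t0 + T) - y (t0 + T)\<bar> \<le> (e + M / (2 * pi * \<bar>s\<bar>)) * exp (2 * pi * \<bar>s\<bar> * (t0 + T - t0))"
  proof (rule gronwall_perturbed[where d = "\<lambda>t. c + \<sigma>\<^sup>2 * drift_term a b (g t)"
        and G = "\<lambda>y. s * sin (2 * pi * (y - p))"])
    show "continuous_on {t0..t0 + T} g" by (rule is_ctrl_sol_continuous_on[OF sol \<open>0 \<le> t0\<close>])
    show "continuous_on {t0..t0 + T} y"
      unfolding y_def sine_flow_def by (intro continuous_intros) simp
    show "(g has_real_derivative c + \<sigma>\<^sup>2 * drift_term a b (g t) + s * sin (2 * pi * (g t - p))) (at t)"
      if "t0 < t" "t < t0 + T" for t
      using is_ctrl_sol_has_real_derivative[OF sol \<open>0 \<le> t0\<close> that const cont] by (simp add: field)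
    show "(y has_real_derivative s * sin (2 * pi * (y t - p))) (at t)" for t
      using sine_flow_has_real_derivative[of s p' z "t + - t0"]
      unfolding DERIV_shift y_def[abs_def] sin_diff_shift_Ints[OF \<open>p' - p \<in> \<int>\<close>] by simp
    show "\<bar>s * sin (2 * pi * (u - p)) - s * sin (2 * pi * (v - p))\<bar> \<le> 2 * pi * \<bar>s\<bar> * \<bar>u - v\<bar>" for u v
      by (rule sine_field_lipschitz)
    show "0 \<le> M" using bound[of 0] by linarith
    show "\<bar>g t0 - y t0\<bar> \<le> e" using start by (simp add: y_def)
    show "\<bar>c + \<sigma>\<^sup>2 * drift_term a b (g t)\<bar> \<le> M" for t by (rule bound)
    show "t0 \<le> t0 + T" and "0 < 2 * pi * \<bar>s\<bar>" using \<open>T > 0\<close> \<open>s \<noteq> 0\<close> by auto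
  qed
  thus ?thesis by (simp add: y_def)
qed

lemma smooth_fun_differentiable: "smooth_fun f \<Longrightarrow> f differentiable (at x)"
  unfolding smooth_fun_def by (metis funpow_0)

lemma smooth_fun_continuous_on: "smooth_fun f \<Longrightarrow> continuous_on S f"
  by (meson continuous_at_imp_continuous_on differentiable_imp_continuous_within smooth_fun_differentiable)

lemma one_periodic_deriv:
  assumes "one_periodic f" and "\<And>x. f differentiable (at x)"
  shows "one_periodic (deriv f)"
  unfolding one_periodic_def
proof
  fix x
  obtain D where D: "(f has_real_derivative D) (at (x + 1))"
    using assms(2) real_differentiable_def by blast
  hence "((\<lambda>y. f (y + 1)) has_real_derivative D) (at x)" unfolding DERIV_shift .
  moreover have "(\<lambda>y. f (y + 1)) = f" using assms(1) by (simp add: one_periodic_def)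
  ultimately show "deriv f (x + 1) = deriv f x" using D by (simp add: DERIV_imp_deriv)
qed

lemma one_periodic_drift_term:
  assumes "one_periodic a" and "\<And>k. one_periodic (b k)" and "\<And>k. smooth_fun (b k)"
  shows "one_periodic (drift_term a b)"
proof -
  have "one_periodic (deriv (b k))" for k
    using one_periodic_deriv assms(2,3) smooth_fun_differentiable by blast
  thus ?thesis using assms(1,2) by (simp add: one_periodic_def drift_term_def)
qed

lemma one_periodic_bounded:
  assumes "one_periodic f" and "continuous_on UNIV f"
  obtains B where "\<And>x. \<bar>f x\<bar> \<le> B"
proof -
  interpret periodic_fun_simple' f
    using assms(1) by unfold_locales (simp add: one_periodic_def)
  have "bounded (f ` {0..1})"
    by (intro compact_imp_bounded compact_continuous_image continuous_on_subset[OF assms(2)]) auto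
  then obtain B where B: "\<forall>x\<in>{0..1}. \<bar>f x\<bar> \<le> B" by (auto simp: bounded_real)
  have "\<bar>f x\<bar> \<le> B" for x
    using B[rule_format, of "frac x"] minus_of_int[of x "\<lfloor>x\<rfloor>"] frac_lt_1[of x] by (simp add: frac_def)
  thus ?thesis by (rule that)
qed

lemma exists_control_for_sine_field:
  assumes span: "{(\<lambda>x. u * b 1 x + v * b (-1) x) | u v. True}
               = {(\<lambda>x. L * sin (2 * pi * x + \<eta>)) | L \<eta>. True}"
    and "\<sigma> \<noteq> 0"
  shows "\<exists>w. \<forall>y. \<sigma> * (b 1 y * fst w + b (-1) y * snd w) = s * sin (2 * pi * (y - p))"
proof -
  have "(\<lambda>x. s / \<sigma> * sin (2 * pi * x + - 2 * pi * p)) \<in> {(\<lambda>x. u * b 1 x + v * b (-1) x) | u v. True}"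
    unfolding span by blast
  then obtain u v where uv: "\<And>x. s / \<sigma> * sin (2 * pi * x + - 2 * pi * p) = u * b 1 x + v * b (-1) x"
    by (auto dest: fun_cong)
  have "\<sigma> * (b 1 y * u + b (-1) y * v) = s * sin (2 * pi * (y - p))" for y
    using uv[of y] \<open>\<sigma> \<noteq> 0\<close> by (simp add: field_simps right_diff_distrib)
  thus ?thesis by (intro exI[of _ "(u, v)"]) simp
qed

text \<open>Only times \<open>r \<ge> 0\<close> matter; for \<open>r < 0\<close> the value is \<open>w 0\<close>.\<close>
definition piecewise_control :: "real \<Rightarrow> (nat \<Rightarrow> real \<times> real) \<Rightarrow> nat \<Rightarrow> real \<Rightarrow> real \<times> real" where
  "piecewise_control T w n r = (if r < real n * T then w (nat \<lfloor>r / T\<rfloor>) else (0, 0))"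

lemma piecewise_control_phase:
  assumes "T > 0" and "i < n" and "real i * T \<le> r" and "r < real (Suc i) * T"
  shows "piecewise_control T w n r = w i"
proof -
  have "real i \<le> r / T" and "r / T < real i + 1" using assms by (simp_all add: field_simps)
  hence "\<lfloor>r / T\<rfloor> = int i" by (simp add: floor_eq_iff)
  moreover have "r < real n * T"
  proof -
    have "real (Suc i) * T \<le> real n * T" using assms by (intro mult_right_mono) auto
    thus ?thesis using assms(4) by linarith
  qed
  ultimately show ?thesis by (simp add: piecewise_control_def)
qed

lemma in_H_piecewise_control:
  assumes "T > 0"
  shows "in_H (piecewise_control T w n)"
  unfolding in_H_def
proof (intro exI[of _ n] exI[of _ "\<lambda>i. real i * T"] exI[of _ w] conjI allI impI)
  show "real i * T < real (Suc i) * T" for i using assms by simp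
  show "piecewise_control T w n s = w i" if "i < n" "real i * T \<le> s \<and> s < real (Suc i) * T" for i s
    using piecewise_control_phase[OF assms] that by simp
  show "piecewise_control T w n s = (0, 0)" if "real n * T \<le> s" for s
    using that by (simp add: piecewise_control_def)
qed simp

text \<open>Phase \<open>i\<close> applies the field \<open>steering_speed K i * sin (2\<pi>(y - steering_centre i))\<close>:
  even phases contract towards the centre (modulo 1), odd phases undo the preceding contraction.\<close>
definition steering_centre :: "nat \<Rightarrow> real" where
  "steering_centre i = [0, 0, 1/3, 1/3, -1/3] ! i"

definition steering_speed :: "real \<Rightarrow> nat \<Rightarrow> real" where
  "steering_speed K i = (if even i then - K else K)"

text \<open>A contracting phase moves \<open>centre \<plusminus> 1/3\<close>, where \<open>tan (\<pi>/3) = \<surd>3\<close>, to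
  \<open>centre \<plusminus> contraction_offset K T\<close>.\<close>
definition contraction_offset :: "real \<Rightarrow> real \<Rightarrow> real" where
  "contraction_offset K T = arctan (sqrt 3 * exp (- 2 * pi * K * T)) / pi"

text \<open>Each phase multiplies the deviation by \<open>exp (2\<pi>KT)\<close> and adds \<open>M / (2\<pi>K)\<close>.\<close>
definition tracking_error :: "real \<Rightarrow> real \<Rightarrow> real \<Rightarrow> nat \<Rightarrow> real" where
  "tracking_error M K T k = real k * (M / (2 * pi * K)) * exp (2 * pi * K * T) ^ k"

lemma tracking_error_step:
  assumes "M \<ge> 0" and "K > 0" and "T \<ge> 0"
  shows "(tracking_error M K T k + M / (2 * pi * K)) * exp (2 * pi * K * T) \<le> tracking_error M K T (Suc k)"
proof -
  define E where "E = exp (2 * pi * K * T)"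
  define C where "C = M / (2 * pi * K)"
  have "1 \<le> E" and "C \<ge> 0" using assms by (simp_all add: E_def C_def)
  hence "C * E \<le> C * E ^ Suc k" using power_increasing[of 1 "Suc k" E] by (intro mult_left_mono) auto
  hence "(real k * C * E ^ k + C) * E \<le> real (Suc k) * C * E ^ Suc k" by (simp add: algebra_simps)
  thus ?thesis unfolding tracking_error_def E_def[symmetric] C_def[symmetric] .
qed

lemma tracking_error_mono:
  assumes "M \<ge> 0" and "K > 0" and "T \<ge> 0" and "k \<le> l"
  shows "tracking_error M K T k \<le> tracking_error M K T l"
proof -
  have "1 \<le> exp (2 * pi * K * T)" using assms by simp
  hence "exp (2 * pi * K * T) ^ k \<le> exp (2 * pi * K * T) ^ l" by (rule power_increasing[OF \<open>k \<le> l\<close>])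
  thus ?thesis unfolding tracking_error_def using assms by (intro mult_mono) auto
qed

lemma arctan_sign_sqrt3: "d \<in> {-1, 1} \<Longrightarrow> arctan (d * sqrt 3) = d * pi / 3"
  using arctan_tan[of "pi / 3"] by (auto simp: tan_60 arctan_minus)

locale sine_steering =
  fixes c \<sigma> :: real and a :: "real \<Rightarrow> real" and b :: "int \<Rightarrow> real \<Rightarrow> real"
    and M K T :: real and w :: "nat \<Rightarrow> real \<times> real"
  assumes drift_continuous: "continuous_on UNIV (drift_term a b)"
    and b_continuous: "continuous_on UNIV (b 1)" "continuous_on UNIV (b (-1))"
    and drift_bounded: "\<And>y. \<bar>c + \<sigma>\<^sup>2 * drift_term a b y\<bar> \<le> M"
    and K_pos: "K > 0" and T_pos: "T > 0"
    and steering_field: "\<And>i y. \<sigma> * (b 1 y * fst (w i) + b (-1) y * snd (w i))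
                                = steering_speed K i * sin (2 * pi * (y - steering_centre i))"
begin

abbreviation "control \<equiv> piecewise_control T w 5"
abbreviation "offset \<equiv> contraction_offset K T"
abbreviation "err \<equiv> tracking_error M K T"

lemma M_nonneg: "M \<ge> 0"
  using drift_bounded[of 0] by linarith

lemma phase_step:
  assumes sol: "is_ctrl_sol c \<sigma> a b control x g" and "i < 5" and "p - steering_centre i \<in> \<int>"
    and start: "\<bar>g (real i * T) - sine_flow (steering_speed K i) p z 0\<bar> \<le> err i"
  shows "\<bar>g (real (Suc i) * T) - sine_flow (steering_speed K i) p z T\<bar> \<le> err (Suc i)"
proof -
  have const: "control r = (fst (w i), snd (w i))" if "real i * T \<le> r" "r < real i * T + T" for r
    using piecewise_control_phase[OF T_pos \<open>i < 5\<close>] that by (simp add: algebra_simps)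
  have speed: "steering_speed K i \<noteq> 0" "\<bar>steering_speed K i\<bar> = K"
    using K_pos by (auto simp: steering_speed_def)
  have "\<bar>g (real i * T + T) - sine_flow (steering_speed K i) p z T\<bar>
      \<le> (err i + M / (2 * pi * K)) * exp (2 * pi * K * T)"
    using sine_phase_tracking[OF sol _ T_pos const steering_field speed(1) drift_continuous
        b_continuous drift_bounded \<open>p - steering_centre i \<in> \<int>\<close> start] T_pos
    by (simp add: speed(2))
  also have "\<dots> \<le> err (Suc i)"
    using tracking_error_step[OF M_nonneg K_pos] T_pos by simp
  finally show ?thesis by (simp add: algebra_simps)
qed

lemma fixed_step:
  assumes "is_ctrl_sol c \<sigma> a b control x g" and "i < 5" and "p - steering_centre i \<in> \<int>"
    and "\<bar>g (real i * T) - p\<bar> \<le> err i"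
  shows "\<bar>g (real (Suc i) * T) - p\<bar> \<le> err (Suc i)"
  using phase_step[OF assms(1-3), of 0] assms(4) by (simp add: sine_flow_def)

lemma contracting_step:
  assumes "is_ctrl_sol c \<sigma> a b control x g" and "i < 5" and "p - steering_centre i \<in> \<int>"
    and "even i" and "d \<in> {-1, 1}" and "\<bar>g (real i * T) - (p + d / 3)\<bar> \<le> err i"
  shows "\<bar>g (real (Suc i) * T) - (p + d * offset)\<bar> \<le> err (Suc i)"
proof -
  have "sine_flow (steering_speed K i) p (d * sqrt 3) 0 = p + d / 3"
    using arctan_sign_sqrt3[OF \<open>d \<in> {-1, 1}\<close>] by (simp add: sine_flow_def)
  moreover have "sine_flow (steering_speed K i) p (d * sqrt 3) T = p + d * offset"
    using \<open>even i\<close> \<open>d \<in> {-1, 1}\<close>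
    by (auto simp: sine_flow_def steering_speed_def contraction_offset_def arctan_minus)
  ultimately show ?thesis using phase_step[OF assms(1-3), of "d * sqrt 3"] assms(6) by simp
qed

lemma expanding_step:
  assumes "is_ctrl_sol c \<sigma> a b control x g" and "i < 5" and "p - steering_centre i \<in> \<int>"
    and "odd i" and "d \<in> {-1, 1}" and "\<bar>g (real i * T) - (p + d * offset)\<bar> \<le> err i"
  shows "\<bar>g (real (Suc i) * T) - (p + d / 3)\<bar> \<le> err (Suc i)"
proof -
  define z where "z = d * sqrt 3 * exp (- 2 * pi * K * T)"
  have "sine_flow (steering_speed K i) p z 0 = p + d * offset"
    using \<open>d \<in> {-1, 1}\<close> by (auto simp: z_def sine_flow_def contraction_offset_def arctan_minus)
  moreover have "z * exp (2 * pi * K * T) = d * sqrt 3" by (simp add: z_def flip: exp_add)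
  hence "sine_flow (steering_speed K i) p z T = p + d / 3"
    using \<open>odd i\<close> arctan_sign_sqrt3[OF \<open>d \<in> {-1, 1}\<close>] by (simp add: sine_flow_def steering_speed_def)
  ultimately show ?thesis using phase_step[OF assms(1-3), of z] assms(6) by simp
qed

lemma trajectory_from_zero:
  assumes sol: "is_ctrl_sol c \<sigma> a b control 0 g"
  shows "\<bar>g (3 * T) - (1/3 - offset)\<bar> \<le> err 3" and "\<bar>g (5 * T) - (-1/3 + offset)\<bar> \<le> err 5"
proof -
  have "\<bar>g 0 - 0\<bar> \<le> err 0" using is_ctrl_sol_initial[OF sol] by (simp add: tracking_error_def)
  hence "\<bar>g T - 0\<bar> \<le> err 1" using fixed_step[OF sol, of 0 0] by (simp add: steering_centre_def flip: One_nat_def)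
  hence "\<bar>g (2 * T) - 0\<bar> \<le> err 2" using fixed_step[OF sol, of 1 0] by (simp add: steering_centre_def flip: One_nat_def)
  thus "\<bar>g (3 * T) - (1/3 - offset)\<bar> \<le> err 3"
    using contracting_step[OF sol, of 2 "1/3" "-1"] by (simp add: steering_centre_def flip: One_nat_def)
  hence "\<bar>g (4 * T) - 0\<bar> \<le> err 4"
    using expanding_step[OF sol, of 3 "1/3" "-1"] by (simp add: steering_centre_def flip: One_nat_def)
  thus "\<bar>g (5 * T) - (-1/3 + offset)\<bar> \<le> err 5"
    using contracting_step[OF sol, of 4 "-1/3" 1] by (simp add: steering_centre_def flip: One_nat_def)
qed


lemma trajectory_from_third:
  assumes sol: "is_ctrl_sol c \<sigma> a b control (1/3) g"
  shows "\<bar>g T - offset\<bar> \<le> err 1" and "\<bar>g (5 * T) - (2/3 - offset)\<bar> \<le> err 5"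
proof -
  have "\<bar>g 0 - (0 + 1 / 3)\<bar> \<le> err 0" using is_ctrl_sol_initial[OF sol] by (simp add: tracking_error_def)
  thus "\<bar>g T - offset\<bar> \<le> err 1"
    using contracting_step[OF sol, of 0 0 1] by (simp add: steering_centre_def flip: One_nat_def)
  hence "\<bar>g (2 * T) - 1/3\<bar> \<le> err 2"
    using expanding_step[OF sol, of 1 0 1] by (simp add: steering_centre_def flip: One_nat_def)
  hence "\<bar>g (3 * T) - 1/3\<bar> \<le> err 3"
    using fixed_step[OF sol, of 2 "1/3"] by (simp add: steering_centre_def)
  hence "\<bar>g (4 * T) - 1/3\<bar> \<le> err 4"
    using fixed_step[OF sol, of 3 "1/3"] by (simp add: steering_centre_def)
  thus "\<bar>g (5 * T) - (2/3 - offset)\<bar> \<le> err 5"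
    using contracting_step[OF sol, of 4 "2/3" "-1"] by (simp add: steering_centre_def)
qed

lemma trajectory_from_minus_third:
  assumes sol: "is_ctrl_sol c \<sigma> a b control (-1/3) g"
  shows "\<bar>g T - (- offset)\<bar> \<le> err 1" and "\<bar>g (3 * T) - (-2/3 + offset)\<bar> \<le> err 3"
proof -
  have "\<bar>g 0 - (0 + -1 / 3)\<bar> \<le> err 0" using is_ctrl_sol_initial[OF sol] by (simp add: tracking_error_def)
  thus "\<bar>g T - (- offset)\<bar> \<le> err 1"
    using contracting_step[OF sol, of 0 0 "-1"] by (simp add: steering_centre_def flip: One_nat_def)
  hence "\<bar>g (2 * T) - (-1/3)\<bar> \<le> err 2"
    using expanding_step[OF sol, of 1 0 "-1"] by (simp add: steering_centre_def flip: One_nat_def)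
  thus "\<bar>g (3 * T) - (-2/3 + offset)\<bar> \<le> err 3"
    using contracting_step[OF sol, of 2 "-2/3" 1] by (simp add: steering_centre_def)
qed

lemma steering_separates_points:
  assumes "err 5 < offset" and "2 * offset \<le> \<epsilon>"
  shows "\<forall>g1 g2 g3. is_ctrl_sol c \<sigma> a b control 0 g1 \<and> is_ctrl_sol c \<sigma> a b control (1/3) g2
        \<and> is_ctrl_sol c \<sigma> a b control (-1/3) g3 \<longrightarrow>
      0 - \<epsilon> \<le> g3 T \<and> g3 T < g2 T \<and> g2 T \<le> 0 + \<epsilon> \<and>
      1/3 - \<epsilon> \<le> g1 (3*T) \<and> g1 (3*T) < g3 (3*T) + 1 \<and> g3 (3*T) + 1 \<le> 1/3 + \<epsilon> \<and>
      -1/3 - \<epsilon> \<le> g2 (5*T) - 1 \<and> g2 (5*T) - 1 < g1 (5*T) \<and> g1 (5*T) \<le> -1/3 + \<epsilon>"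
proof (intro allI impI, elim conjE)
  fix g1 g2 g3
  assume sols: "is_ctrl_sol c \<sigma> a b control 0 g1" "is_ctrl_sol c \<sigma> a b control (1/3) g2"
    "is_ctrl_sol c \<sigma> a b control (-1/3) g3"
  have "err 1 \<le> err 5" and "err 3 \<le> err 5"
    by (intro tracking_error_mono[OF M_nonneg K_pos]; use T_pos in simp)+
  thus "0 - \<epsilon> \<le> g3 T \<and> g3 T < g2 T \<and> g2 T \<le> 0 + \<epsilon> \<and>
      1/3 - \<epsilon> \<le> g1 (3*T) \<and> g1 (3*T) < g3 (3*T) + 1 \<and> g3 (3*T) + 1 \<le> 1/3 + \<epsilon> \<and>
      -1/3 - \<epsilon> \<le> g2 (5*T) - 1 \<and> g2 (5*T) - 1 < g1 (5*T) \<and> g1 (5*T) \<le> -1/3 + \<epsilon>"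
    using trajectory_from_zero[OF sols(1)] trajectory_from_third[OF sols(2)]
      trajectory_from_minus_third[OF sols(3)] assms
    by (simp add: abs_le_iff; linarith)
qed

end

lemma exists_steering_constants:
  assumes "\<epsilon> > 0" and "M \<ge> 0"
  obtains K T where "K > 0" and "T > 0"
    and "tracking_error M K T 5 < contraction_offset K T" and "2 * contraction_offset K T \<le> \<epsilon>"
proof -
  define q where "q = min \<epsilon> 1 / 4"
  define \<delta> where "\<delta> = arctan (sqrt 3 * q) / pi"
  define D where "D = 2 * pi * \<delta> * q ^ 5"
  define K where "K = 5 * (M + 1) / D + 1"
  define T where "T = - ln q / (2 * pi * K)"
  have q: "0 < q" "q < 1" "4 * q \<le> \<epsilon>" using assms by (auto simp: q_def)
  hence "\<delta> > 0" by (simp add: \<delta>_def)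
  hence "D > 0" using q by (simp add: D_def)
  hence "K > 0" using assms by (simp add: K_def add_pos_nonneg)
  have "T > 0" using ln_less_zero[OF q(1,2)] \<open>K > 0\<close> by (simp add: T_def divide_neg_pos)
  have exp_KT: "exp (2 * pi * K * T) = 1 / q" "exp (- 2 * pi * K * T) = q"
    using q \<open>K > 0\<close> by (simp_all add: T_def exp_minus inverse_eq_divide)
  have "K * D = 5 * (M + 1) + D" using \<open>D > 0\<close> by (simp add: K_def field_simps)
  hence "5 * M < 2 * pi * K * \<delta> * q ^ 5" using \<open>D > 0\<close> by (simp add: D_def mult_ac)
  have "tracking_error M K T 5 = 5 * M / (2 * pi * K * q ^ 5)"
    unfolding tracking_error_def exp_KT(1) by (simp add: power_one_over)
  also have "\<dots> < \<delta>"
    using \<open>5 * M < 2 * pi * K * \<delta> * q ^ 5\<close> q \<open>K > 0\<close> by (simp add: pos_divide_less_eq mult_ac)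
  finally have "tracking_error M K T 5 < \<delta>" .
  moreover have "2 * \<delta> \<le> \<epsilon>"
  proof -
    have "sqrt 3 \<le> 2" using real_sqrt_le_mono[of 3 4] by simp
    hence "sqrt 3 * q \<le> 2 * q" using q by (intro mult_right_mono) auto
    moreover have "arctan (sqrt 3 * q) \<le> sqrt 3 * q" using q by (simp add: arctan_le_self)
    moreover have "\<epsilon> \<le> pi * \<epsilon>" using mult_right_mono[of 1 pi \<epsilon>] pi_gt3 assms(1) by simp
    ultimately have "2 * arctan (sqrt 3 * q) \<le> pi * \<epsilon>" using q by linarith
    thus ?thesis by (simp add: \<delta>_def field_simps)
  qed
  ultimately show ?thesis
    using that \<open>K > 0\<close> \<open>T > 0\<close> exp_KT by (simp add: contraction_offset_def \<delta>_def)
qed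

theorem lemma4p14:
  fixes c \<sigma> :: real and a :: "real \<Rightarrow> real" and b :: "int \<Rightarrow> real \<Rightarrow> real"
  assumes sigma_pos: "\<sigma> > 0"
    and a_smooth: "smooth_fun a" and a_per: "one_periodic a"
    and b_smooth: "\<And>k. smooth_fun (b k)" and b_per: "\<And>k. one_periodic (b k)"
    and b_summable: "\<And>x. (\<lambda>k. deriv (b k) x * b k x) summable_on UNIV"
    and drift_smooth: "smooth_fun (drift_term a b)"
    and span: "{(\<lambda>x. u * b 1 x + v * b (-1) x) | u v. True}
               = {(\<lambda>x. L * sin (2 * pi * x + \<eta>)) | L \<eta>. True}"
    and eps: "\<epsilon> > 0"
  shows "\<exists>T>0. \<exists>h. in_H h \<and>
    (\<forall>g1 g2 g3. is_ctrl_sol c \<sigma> a b h 0 g1 \<and> is_ctrl_sol c \<sigma> a b h (1/3) g2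
        \<and> is_ctrl_sol c \<sigma> a b h (-1/3) g3 \<longrightarrow>
      0 - \<epsilon> \<le> g3 T \<and> g3 T < g2 T \<and> g2 T \<le> 0 + \<epsilon> \<and>
      1/3 - \<epsilon> \<le> g1 (3*T) \<and> g1 (3*T) < g3 (3*T) + 1 \<and> g3 (3*T) + 1 \<le> 1/3 + \<epsilon> \<and>
      -1/3 - \<epsilon> \<le> g2 (5*T) - 1 \<and> g2 (5*T) - 1 < g1 (5*T) \<and> g1 (5*T) \<le> -1/3 + \<epsilon>)"
proof -
  have cont: "continuous_on UNIV (drift_term a b)" "continuous_on UNIV (b 1)" "continuous_on UNIV (b (-1))"
    using drift_smooth b_smooth by (simp_all add: smooth_fun_continuous_on)
  obtain B where B: "\<And>y. \<bar>drift_term a b y\<bar> \<le> B"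
    using one_periodic_bounded[OF one_periodic_drift_term[OF a_per b_per b_smooth] cont(1)] by blast
  define M where "M = \<bar>c\<bar> + \<sigma>\<^sup>2 * B"
  have bound: "\<bar>c + \<sigma>\<^sup>2 * drift_term a b y\<bar> \<le> M" for y
    using abs_triangle_ineq[of c "\<sigma>\<^sup>2 * drift_term a b y"] mult_left_mono[OF B[of y], of "\<sigma>\<^sup>2"]
    by (simp add: M_def abs_mult)
  obtain K T where "K > 0" "T > 0" and small: "tracking_error M K T 5 < contraction_offset K T"
      "2 * contraction_offset K T \<le> \<epsilon>"
    using exists_steering_constants[OF eps, of M] bound[of 0] by force
  have "\<forall>i. \<exists>w. \<forall>y. \<sigma> * (b 1 y * fst w + b (-1) y * snd w)
                      = steering_speed K i * sin (2 * pi * (y - steering_centre i))"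
    using exists_control_for_sine_field[OF span] sigma_pos by simp
  then obtain w where "\<And>i y. \<sigma> * (b 1 y * fst (w i) + b (-1) y * snd (w i))
                      = steering_speed K i * sin (2 * pi * (y - steering_centre i))"
    by metis
  then interpret sine_steering c \<sigma> a b M K T w
    using cont bound \<open>K > 0\<close> \<open>T > 0\<close> by unfold_locales
  show ?thesis
    using \<open>T > 0\<close> in_H_piecewise_control steering_separates_points[OF small] by blast
qed

end
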